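(* There exist constants $C_0,C_1,C_2,C>0$ independent of $(\lambda,\sigma,\mu)$ such that for all small $\mu>0$, all $\lambda\in[\lambda^*/2,2\lambda^*]$, $\sigma\in[\sigma^*/2,2\sigma^*]$, every $i\in\{0,\dots,k-1\}$ and $\rho\in\mathbb{R}$: in $\overline{\mathbf{B}}\setminus\overline{\Omega}_i$, $$\frac{C_0}{\mu^{1/2}}\le d_i\le d_{i^*}\le C_1d_i,\qquad \Big|\frac{1}{d_i^\rho}-\frac{1}{d_{i^*}^\rho}\Big|\le\frac{C}{\mu^{1/2}d_{i^*}^{\rho+1}};$$ and in $\overline{\Omega}_i$, $$d_i\le d_{i^*},\qquad \frac{C_2}{\mu^{1/2}}\le d_{i^*}.$$
   Context: Let $\mathbf{B}$ be the open unit ball in $\mathbb{R}^3$. Let $K$ be a radial nonnegative function, $K(x)=K(|x|)$, with $K\in C^0([0,1])\cap C^{1,1}((0,1])$, $K(1)=1$, $K'(1)>0$. Let $\Phi(x)=3^{1/4}(1+|x|^2)^{-1/2}$. Set $A_1=\frac16\int_{\mathbb{R}^3}\Phi^6\,dx$, $A_2=\frac14\int_{\mathbb{R}^3}\Phi(0)\Phi^5\,dx$ and, for $\sigma>0$, $L(\sigma)=\sum_{j\in\mathbb{Z}\setminus\{0\}}\big(\frac{1}{|j\pi|}-\frac{1}{((j\pi)^2+\sigma^2)^{1/2}}\big)$. The system $L(\sigma)=0$, $K'(1)A_1\lambda=A_2L'(\sigma)$ has a unique positive root, denoted $(\lambda^*,\sigma^* )$. For $\mu>0$ small let $k=\lfloor\mu^{-1/2}\rfloor$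 and $\mathbf{m}_i=(\cos\frac{2\pi i}{k},\sin\frac{2\pi i}{k},0)$, $i=0,\dots,k-1$. For $\lambda\in[\lambda^*/2,2\lambda^*]$, $\sigma\in[\sigma^*/2,2\sigma^*]$ put $\varepsilon=\mu/\lambda$, $r=1-\sigma\mu^{1/2}$, $d_i(x)=\sqrt{1+|x-r\mathbf{m}_i|^2/\varepsilon^2}$, $d_{i^*}(x)=\sqrt{1+|rx-\mathbf{m}_i|^2/\varepsilon^2}$, and $\Omega_i=\{x\in\mathbf{B}:x\cdot\mathbf{m}_i=\max_{0\le j\le k-1}x\cdot\mathbf{m}_j\}$. *)

theory Defs
  imports "HOL-Analysis.Analysis"
begin

definition mvec :: "nat \<Rightarrow> nat \<Rightarrow> real^3" where
  "mvec k i = vector [cos (2 * pi * real i / real k), sin (2 * pi * real i / real k), 0]"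

definition Omega :: "nat \<Rightarrow> nat \<Rightarrow> (real^3) set" where
  "Omega k i = {x \<in> ball 0 1. x \<bullet> mvec k i = Max ((\<lambda>j. x \<bullet> mvec k j) ` {..<k})}"

definition dfun :: "real \<Rightarrow> real \<Rightarrow> real^3 \<Rightarrow> real^3 \<Rightarrow> real" where
  "dfun eps r m x = sqrt (1 + (norm (x - r *\<^sub>R m))^2 / eps^2)"

definition dstar :: "real \<Rightarrow> real \<Rightarrow> real^3 \<Rightarrow> real^3 \<Rightarrow> real" where
  "dstar eps r m x = sqrt (1 + (norm (r *\<^sub>R x - m))^2 / eps^2)"

end

theory Submission
  imports Defs
begin

text \<open>
  Outside \<open>closure (Omega k i)\<close> some \<open>m_j\<close> satisfies \<open>x \<bullet> m_j > x \<bullet> m_i\<close>; since distinct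
  points \<open>m_j\<close> are at angle at least \<open>2\<pi>/k\<close>, this forces \<open>|x - r m_i| \<ge> 1/k \<ge> \<surd>\<mu>\<close>,
  which gives the lower bound on \<open>d_i\<close>. The identity
  \<open>|r x - m|\<^sup>2 = |x - r m|\<^sup>2 + (1 - r\<^sup>2)(1 - |x|\<^sup>2)\<close> shows \<open>d_i \<le> d_i*\<close>, and its defect term is
  at most \<open>4(1 - r)((1 - r) + |x - r m|)\<close>. As \<open>1 - r = \<sigma>\<surd>\<mu> \<le> 2\<sigma>* |x - r m|\<close>, the gap
  \<open>d_i*\<^sup>2 - d_i\<^sup>2\<close> is bounded both by a multiple of \<open>d_i\<^sup>2\<close> and by \<open>d_i\<close> times a multiple of
  \<open>(1 - r)/\<epsilon> \<sim> 1/\<surd>\<mu>\<close>; this gives \<open>d_i* \<le> C\<^sub>1 d_i\<close> and \<open>d_i* - d_i \<le> C/\<surd>\<mu>\<close>, and the mean value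
  theorem for \<open>t \<mapsto> t powr -\<rho>\<close> turns the latter into the bound on powers. Inside
  \<open>closure (Omega k i)\<close> only \<open>|r x - m| \<ge> 1 - r\<close> is needed.
\<close>

subsection \<open>The points \<open>m\<^sub>i\<close> and the sectors \<open>\<Omega>\<^sub>i\<close>\<close>

lemma norm_mvec [simp]: "norm (mvec k i) = 1"
  and inner_mvec: "mvec k i \<bullet> mvec k j = cos (2*pi*real i/real k - 2*pi*real j/real k)"
proof -
  show inner: "mvec k i \<bullet> mvec k j = cos (2*pi*real i/real k - 2*pi*real j/real k)" for i j
    unfolding mvec_def by (simp add: inner_vec_def sum_3 vector_3 cos_diff)
  show "norm (mvec k i) = 1"
    unfolding norm_eq_sqrt_inner inner by simp
qed

lemma sin_ge_half_self:
  fixes y :: real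
  assumes "0 \<le> y" "y \<le> 8/5"
  shows "y/2 \<le> sin y"
proof -
  have "\<bar>sin y - (\<Sum>m<3. sin_coeff m * y ^ m)\<bar> \<le> inverse (fact 3) * \<bar>y\<bar> ^ 3"
    by (rule Maclaurin_sin_bound)
  then have "\<bar>sin y - y\<bar> \<le> y^3/6"
    using assms by (simp add: sin_coeff_def eval_nat_numeral fact_numeral)
  moreover have "y^3/6 \<le> y/2"
  proof -
    have "y*y \<le> 3" using mult_mono[of y "8/5" y "8/5"] assms by simp
    then show ?thesis using assms by (simp add: power3_eq_cube mult_left_mono)
  qed
  ultimately show ?thesis by linarith
qed

lemma one_minus_cos_two_pi_div_ge:
  assumes "2 \<le> k"
  shows "4 / (real k)^2 \<le> 1 - cos (2*pi/real k)"
proof -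
  define y where "y = pi / real k"
  have "0 \<le> y" by (simp add: y_def)
  moreover have "y \<le> 8/5"
    using assms pi_approx(2) by (simp add: y_def field_simps)
  ultimately have "(y/2)^2 \<le> (sin y)^2"
    using sin_ge_half_self by (simp add: power_mono)
  moreover have "cos (2*pi/real k) = 1 - 2 * (sin y)^2"
    using cos_double_sin[of y] by (simp add: y_def)
  ultimately have "y^2/2 \<le> 1 - cos (2*pi/real k)"
    by (simp add: power_divide)
  moreover have "4 / (real k)^2 \<le> y^2/2"
  proof -
    have "8 / (2*(real k)^2) \<le> pi^2 / (2*(real k)^2)"
      using pi_gt3 power_mono[of 3 pi 2] by (intro divide_right_mono) auto
    then show ?thesis by (simp add: y_def power_divide)
  qed
  ultimately show ?thesis by linarith
qed

lemma cos_two_pi_mult_div_le: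
  assumes "1 \<le> d" "d < k"
  shows "cos (2*pi*real d/real k) \<le> cos (2*pi/real k)"
proof -
  have mono: "cos (2*pi*real e/real k) \<le> cos (2*pi/real k)" if "1 \<le> e" "2*e \<le> k" for e
    by (rule cos_monotone_0_pi_le) (use that in \<open>auto simp: field_simps\<close>)
  show ?thesis
  proof (cases "2*d \<le> k")
    case True
    then show ?thesis using mono assms by blast
  next
    case False
    have "cos (2*pi*real d/real k) = cos (2*pi - 2*pi*real d/real k)" by simp
    also have "2*pi - 2*pi*real d/real k = 2*pi*real (k-d)/real k"
      using assms by (simp add: field_simps of_nat_diff)
    also have "cos \<dots> \<le> cos (2*pi/real k)"
      using mono[of "k-d"] False assms by simp
    finally show ?thesis .
  qed
qed

lemma inner_mvec_le:
  assumes "i < k" "j < k" "i \<noteq> j"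
  shows "mvec k i \<bullet> mvec k j \<le> cos (2*pi/real k)"
  using assms
proof (induction i j rule: linorder_wlog)
  case (le i j)
  have "2*pi*real i/real k - 2*pi*real j/real k = - (2*pi*real (j-i)/real k)"
    using le by (simp add: field_simps of_nat_diff)
  then show ?case
    using le cos_two_pi_mult_div_le[of "j-i" k] by (simp add: inner_mvec)
next
  case (sym i j)
  then show ?case by (simp add: inner_commute)
qed

lemma norm_diff_scaleR_sq_ge:
  fixes x m m' :: "'a::real_inner"
  assumes "norm m = 1" "norm m' = 1" "x \<bullet> m < x \<bullet> m'" "0 < r"
  shows "r^2 * (1 - m \<bullet> m') / 2 \<le> (norm (x - r *\<^sub>R m))^2"
proof -
  define c where "c = m \<bullet> m'"
  define v where "v = m' - m"
  have mm: "m \<bullet> m = 1" "m' \<bullet> m' = 1" using assms by (simp_all add: norm_eq_1)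
  have c1: "c \<le> 1" unfolding c_def using norm_cauchy_schwarz[of m m'] assms by simp
  have nv: "(norm v)^2 = 2*(1-c)" unfolding v_def c_def power2_norm_eq_inner
    using mm by (simp add: inner_diff inner_commute)
  \<comment> \<open>test \<open>x - r m\<close> against \<open>m' - m\<close>, on which \<open>x\<close> has positive component\<close>
  have "(x - r *\<^sub>R m) \<bullet> v = x \<bullet> m' - x \<bullet> m + r*(1-c)"
    unfolding v_def c_def using mm by (simp add: inner_diff inner_commute algebra_simps)
  then have "r*(1-c) \<le> \<bar>(x - r *\<^sub>R m) \<bullet> v\<bar>" using assms by simp
  also have "\<dots> \<le> norm (x - r *\<^sub>R m) * norm v" by (rule Cauchy_Schwarz_ineq2)
  finally have "(r*(1-c))^2 \<le> (norm (x - r *\<^sub>R m) * norm v)^2"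
    using c1 assms by (intro power_mono) auto
  then have "(r*(1-c))^2 \<le> (norm (x - r *\<^sub>R m))^2 * (2*(1-c))"
    by (simp add: power_mult_distrib nv)
  then have "(r^2*(1-c)) * (1-c) \<le> ((norm (x - r *\<^sub>R m))^2 * 2) * (1-c)"
    by (simp add: power2_eq_square algebra_simps)
  then show ?thesis
    using c1 by (cases "c = 1") (auto simp: c_def mult_le_cancel_right)
qed

lemma norm_scaleR_diff_sq:
  fixes x m :: "'a::real_inner"
  assumes "norm m = 1"
  shows "(norm (r *\<^sub>R x - m))^2 = (norm (x - r *\<^sub>R m))^2 + (1 - r^2)*(1 - (norm x)^2)"
proof -
  have "m \<bullet> m = 1" using assms by (simp add: norm_eq_1)
  then show ?thesis unfolding power2_norm_eq_inner
    by (simp add: inner_commute algebra_simps power2_eq_square)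
qed

lemma closure_Omega_subset: "closure (Omega k i) \<subseteq> cball 0 1"
  by (rule closure_minimal) (auto simp: Omega_def)

lemma in_closure_OmegaI:
  assumes "x \<in> cball (0::real^3) 1" "i < k"
    and "\<And>j. j < k \<Longrightarrow> x \<bullet> mvec k j \<le> x \<bullet> mvec k i"
  shows "x \<in> closure (Omega k i)"
  unfolding closure_approachable
proof (intro allI impI)
  fix e :: real
  assume "e > 0"
  define t where "t = 1 - min e 1 / 2"
  have t: "0 < t" "t < 1" "1 - t < e" using \<open>e > 0\<close> unfolding t_def by auto
  have "Max ((\<lambda>j. (t *\<^sub>R x) \<bullet> mvec k j) ` {..<k}) = (t *\<^sub>R x) \<bullet> mvec k i"
    using t assms(2,3) by (intro Max_eqI) (auto intro: mult_left_mono)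
  moreover have "norm (t *\<^sub>R x) < 1"
  proof -
    have "t * norm x \<le> t" using assms(1) t by (simp add: mult_left_le)
    moreover have "norm (t *\<^sub>R x) = t * norm x" using t by simp
    ultimately show ?thesis using t by linarith
  qed
  ultimately have "t *\<^sub>R x \<in> Omega k i" by (simp add: Omega_def)
  moreover have "dist (t *\<^sub>R x) x < e"
  proof -
    have "dist (t *\<^sub>R x) x = norm ((1 - t) *\<^sub>R x)"
      by (simp add: dist_norm norm_minus_commute algebra_simps)
    also have "\<dots> = (1-t) * norm x" using t by simp
    also have "\<dots> \<le> 1 - t" using t assms(1) by (simp add: mult_left_le)
    finally show ?thesis using t by linarith
  qed
  ultimately show "\<exists>y\<in>Omega k i. dist y x < e" by blast
qed

lemma norm_diff_scaleR_mvec_ge: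
  assumes "2 \<le> k" "i < k" "3/4 \<le> r"
    and x: "x \<in> cball (0::real^3) 1 - closure (Omega k i)"
  shows "1 / real k \<le> norm (x - r *\<^sub>R mvec k i)"
proof -
  obtain j where j: "j < k" and lt: "x \<bullet> mvec k i < x \<bullet> mvec k j"
    using in_closure_OmegaI[of x i k] assms(2) x by (meson DiffE not_le)
  then have "i \<noteq> j" by blast
  then have "mvec k i \<bullet> mvec k j \<le> cos (2*pi/real k)"
    using inner_mvec_le[OF assms(2) j(1)] by blast
  then have "4/(real k)^2 \<le> 1 - mvec k i \<bullet> mvec k j"
    using one_minus_cos_two_pi_div_ge[OF assms(1)] by linarith
  moreover have "(3/4)^2 \<le> r^2" using assms(3) by (intro power_mono) auto
  ultimately have "(3/4)^2 * (4/(real k)^2) / 2 \<le> r^2 * (1 - mvec k i \<bullet> mvec k j) / 2"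
    by (intro divide_right_mono mult_mono) auto
  also have "\<dots> \<le> (norm (x - r *\<^sub>R mvec k i))^2"
    using assms(3) by (intro norm_diff_scaleR_sq_ge[OF norm_mvec norm_mvec lt]) simp
  finally have "(1 / real k)^2 \<le> (norm (x - r *\<^sub>R mvec k i))^2"
    using assms(1) by (simp add: power_divide field_simps)
  then show ?thesis by (rule power2_le_imp_le) simp
qed

subsection \<open>Comparison of \<open>d\<^sub>i\<close> and \<open>d\<^sub>i\<^sub>*\<close>\<close>

lemma dfun_ge_one: "1 \<le> dfun eps r m x"
  by (simp add: dfun_def)

lemma dfun_ge: "0 < eps \<Longrightarrow> norm (x - r *\<^sub>R m) / eps \<le> dfun eps r m x"
  unfolding dfun_def by (rule real_le_rsqrt) (simp add: power_divide)

lemma dstar_ge: "0 < eps \<Longrightarrow> norm (r *\<^sub>R x - m) / eps \<le> dstar eps r m x"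
  unfolding dstar_def by (rule real_le_rsqrt) (simp add: power_divide)

lemma dstar_sq:
  assumes "norm m = 1"
  shows "(dstar eps r m x)^2 = (dfun eps r m x)^2 + (1 - r^2)*(1 - (norm x)^2) / eps^2"
proof -
  have "(dstar eps r m x)^2 = 1 + (norm (r *\<^sub>R x - m))^2 / eps^2"
    by (simp add: dstar_def)
  moreover have "(dfun eps r m x)^2 = 1 + (norm (x - r *\<^sub>R m))^2 / eps^2"
    by (simp add: dfun_def)
  ultimately show ?thesis
    using norm_scaleR_diff_sq[OF assms] by (simp add: add_divide_distrib)
qed

lemma dfun_le_dstar:
  assumes "0 \<le> r" "r \<le> 1" "norm x \<le> 1" "norm m = 1"
  shows "dfun eps r m x \<le> dstar eps r m x"
proof (rule power2_le_imp_le)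
  have "0 \<le> (1 - r^2)*(1 - (norm x)^2)"
    using assms by (intro mult_nonneg_nonneg) (auto simp: power_le_one)
  then show "(dfun eps r m x)^2 \<le> (dstar eps r m x)^2"
    using assms(4) by (simp add: dstar_sq)
qed (simp add: dstar_def)

lemma one_minus_div_le_dstar:
  assumes "0 < eps" "0 \<le> r" "norm x \<le> 1" "norm m = 1"
  shows "(1 - r) / eps \<le> dstar eps r m x"
proof -
  have "norm (r *\<^sub>R x) \<le> r" using assms by (simp add: mult_left_le)
  moreover have "norm m \<le> norm (r *\<^sub>R x) + norm (r *\<^sub>R x - m)"
    using norm_triangle_sub[of m "r *\<^sub>R x"] by (simp add: norm_minus_commute)
  ultimately have "1 - r \<le> norm (r *\<^sub>R x - m)" using assms(4) by linarith
  then have "(1 - r) / eps \<le> norm (r *\<^sub>R x - m) / eps"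
    using assms(1) by (simp add: divide_right_mono)
  also have "\<dots> \<le> dstar eps r m x" using assms(1) by (rule dstar_ge)
  finally show ?thesis .
qed

lemma one_minus_sq_mult_le:
  fixes x m :: "'a::real_normed_vector"
  assumes "0 \<le> r" "r \<le> 1" "norm x \<le> 1" "norm m = 1"
  shows "(1 - r^2)*(1 - (norm x)^2) \<le> 4*(1 - r)*((1 - r) + norm (x - r *\<^sub>R m))"
proof -
  have "r = norm (r *\<^sub>R m)" using assms by simp
  also have "\<dots> \<le> norm x + norm (x - r *\<^sub>R m)"
    using norm_triangle_sub[of "r *\<^sub>R m" x] by (simp add: norm_minus_commute)
  finally have tri: "1 - norm x \<le> (1 - r) + norm (x - r *\<^sub>R m)" by simp
  have "(1 - r^2)*(1 - (norm x)^2) = ((1 - r)*(1 - norm x)) * ((1 + r)*(1 + norm x))"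
    by (simp add: algebra_simps power2_eq_square)
  also have "\<dots> \<le> ((1 - r)*(1 - norm x)) * 4"
    using assms mult_mono[of "1 + r" 2 "1 + norm x" 2] by (intro mult_left_mono) auto
  also have "\<dots> \<le> 4*(1 - r)*((1 - r) + norm (x - r *\<^sub>R m))"
    using mult_left_mono[OF tri, of "4*(1 - r)"] assms(2) by (simp add: algebra_simps)
  finally show ?thesis .
qed

lemma dstar_le_dfun:
  assumes "0 < eps" "0 \<le> r" "r \<le> 1" "norm x \<le> 1" "norm m = 1" "0 \<le> S"
    and defect: "1 - r \<le> S * norm (x - r *\<^sub>R m)"
  shows "dstar eps r m x \<le> sqrt (1 + 4*S*(S + 1)) * dfun eps r m x"
    and "dstar eps r m x - dfun eps r m x \<le> 4*(S + 1)*(1 - r) / eps"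
proof -
  define a where "a = norm (x - r *\<^sub>R m)"
  define di where "di = dfun eps r m x"
  define ds where "ds = dstar eps r m x"
  define c where "c = 4*(S + 1)*(1 - r) / eps"
  have a_di: "a / eps \<le> di" unfolding a_def di_def using assms(1) by (rule dfun_ge)
  have di1: "1 \<le> di" unfolding di_def by (rule dfun_ge_one)
  have ds0: "0 \<le> ds" unfolding ds_def by (simp add: dstar_def)
  have c0: "0 \<le> c" unfolding c_def using assms by simp
  have "ds^2 - di^2 = (1 - r^2)*(1 - (norm x)^2) / eps^2"
    unfolding ds_def di_def using assms(5) by (simp add: dstar_sq)
  also have "\<dots> \<le> 4*(1 - r)*((1 - r) + a) / eps^2"
    unfolding a_def using assms(2-5) one_minus_sq_mult_le by (intro divide_right_mono) auto
  also have "\<dots> \<le> 4*(1 - r)*((S + 1)*a) / eps^2"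
    using assms(3) defect by (intro divide_right_mono mult_left_mono) (auto simp: a_def algebra_simps)
  also have "\<dots> = c * (a / eps)"
    using assms(1) by (simp add: c_def power2_eq_square field_simps)
  finally have gap: "ds^2 - di^2 \<le> c * (a / eps)" .
  have "c * (a / eps) = 4*(S + 1) * ((1 - r) / eps) * (a / eps)"
    by (simp add: c_def)
  also have "\<dots> \<le> 4*(S + 1) * (S * (a / eps)) * (a / eps)"
    using defect assms(1,6) by (intro mult_right_mono mult_left_mono)
      (auto simp: a_def divide_right_mono)
  also have "\<dots> = 4*S*(S + 1) * (a / eps)^2"
    by (simp add: power2_eq_square)
  also have "\<dots> \<le> 4*S*(S + 1) * di^2"
    using a_di assms(1,6) by (intro mult_left_mono power_mono) (auto simp: a_def)
  finally have "ds^2 \<le> (sqrt (1 + 4*S*(S + 1)) * di)^2"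
    using gap assms(6) by (simp add: power_mult_distrib algebra_simps)
  then show "ds \<le> sqrt (1 + 4*S*(S + 1)) * di"
    by (rule power2_le_imp_le) (use di1 assms(6) in simp)
  have "(ds - di) * (ds + di) = ds^2 - di^2"
    by (simp add: algebra_simps power2_eq_square)
  also have "\<dots> \<le> c * di"
    using gap a_di c0 mult_left_mono by fastforce
  also have "\<dots> \<le> c * (ds + di)"
    using c0 ds0 by (intro mult_left_mono) auto
  finally show "ds - di \<le> c"
    using di1 ds0 by (simp add: mult_le_cancel_right)
qed

lemma powr_le_powr_of_comparable:
  fixes a z b C s :: real
  assumes "0 < a" "a \<le> z" "z \<le> b" "b \<le> C * a"
  shows "z powr s \<le> C powr \<bar>s\<bar> * b powr s"
proof (cases "0 \<le> s")
  case True
  have "1 \<le> C" using assms by (metis dual_order.trans mult_le_cancel_right1 not_le)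
  have "z powr s \<le> b powr s" using True assms by (intro powr_mono2) auto
  also have "\<dots> \<le> C powr \<bar>s\<bar> * b powr s"
    using ge_one_powr_ge_zero[OF \<open>1 \<le> C\<close>, of "\<bar>s\<bar>"] by (simp add: mult_le_cancel_right1)
  finally show ?thesis .
next
  case False
  have "z powr s \<le> a powr s" using False assms by (intro powr_mono2') auto
  also have "a powr s = (b/a) powr (-s) * b powr s"
    using assms by (simp add: powr_minus_divide powr_divide)
  also have "(b/a) powr (-s) \<le> C powr (-s)"
    using False assms by (intro powr_mono2) (auto simp: field_simps)
  then have "(b/a) powr (-s) * b powr s \<le> C powr \<bar>s\<bar> * b powr s"
    using False by (intro mult_right_mono) auto
  finally show ?thesis .
qed

lemma abs_inverse_powr_diff_le:
  fixes a b C E \<rho> :: real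
  assumes "0 < a" "a \<le> b" "b \<le> C * a" "b - a \<le> E"
  shows "\<bar>1 / a powr \<rho> - 1 / b powr \<rho>\<bar> \<le> \<bar>\<rho>\<bar> * C powr \<bar>\<rho> + 1\<bar> * E / b powr (\<rho> + 1)"
proof (cases "a = b")
  case True
  then show ?thesis using assms by simp
next
  case False
  then have ab: "a < b" using assms by simp
  have deriv: "((\<lambda>t. t powr (-\<rho>)) has_real_derivative (-\<rho>) * t powr (-\<rho> - 1)) (at t)"
    if "a \<le> t" "t \<le> b" for t
    using assms that by (intro has_real_derivative_powr) auto
  obtain z where z: "a < z" "z < b"
    and mvt: "b powr (-\<rho>) - a powr (-\<rho>) = (b - a) * ((-\<rho>) * z powr (-\<rho> - 1))"
    using MVT2[OF ab deriv] by blast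
  have "\<bar>1 / a powr \<rho> - 1 / b powr \<rho>\<bar> = \<bar>b powr (-\<rho>) - a powr (-\<rho>)\<bar>"
    by (simp add: powr_minus_divide abs_minus_commute)
  also have "\<dots> = (b - a) * (\<bar>\<rho>\<bar> * z powr (-(\<rho> + 1)))"
    using mvt ab by (simp add: abs_mult)
  also have "\<dots> \<le> E * (\<bar>\<rho>\<bar> * (C powr \<bar>-(\<rho> + 1)\<bar> * b powr (-(\<rho> + 1))))"
    using assms ab z powr_le_powr_of_comparable[of a z b C "-(\<rho> + 1)"]
    by (intro mult_mono mult_left_mono) auto
  also have "\<dots> = \<bar>\<rho>\<bar> * C powr \<bar>\<rho> + 1\<bar> * E * b powr (-(\<rho> + 1))"
    by (simp only: abs_minus_cancel mult_ac)
  also have "\<dots> = \<bar>\<rho>\<bar> * C powr \<bar>\<rho> + 1\<bar> * E / b powr (\<rho> + 1)"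
    unfolding powr_minus_divide by simp
  finally show ?thesis .
qed

lemma small_mu_regime:
  fixes mu sig sigstar :: real
  assumes "0 < mu" "mu < (1 / (8 * (1 + sigstar)))^2" "0 < sig" "sig \<le> 2 * sigstar"
  shows "2 \<le> nat \<lfloor>1 / sqrt mu\<rfloor>" and "3/4 \<le> 1 - sig * sqrt mu"
proof -
  have "0 < sigstar" using assms(3,4) by linarith
  have "sqrt mu < 1 / (8 * (1 + sigstar))"
    using assms(2) \<open>0 < sigstar\<close> real_sqrt_less_mono by fastforce
  then have q: "8 * (1 + sigstar) * sqrt mu < 1"
    using \<open>0 < sigstar\<close> by (simp add: field_simps)
  moreover have "0 < sigstar * sqrt mu" using assms(1) \<open>0 < sigstar\<close> by simp
  ultimately have "8 * sqrt mu < 1" by (simp add: algebra_simps)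
  then have "2 < 1 / sqrt mu" using assms(1) by (simp add: field_simps)
  then show "2 \<le> nat \<lfloor>1 / sqrt mu\<rfloor>" by linarith
  have "sig * sqrt mu \<le> 2 * (sigstar * sqrt mu)"
    using assms by (simp add: mult_right_mono)
  moreover have "8 * sqrt mu + 8 * (sigstar * sqrt mu) < 1"
    using q by (simp add: algebra_simps)
  ultimately show "3/4 \<le> 1 - sig * sqrt mu"
    using assms(1) real_sqrt_gt_zero[of mu] by linarith
qed

lemma dfun_dstar_estimates:
  fixes lamstar sigstar mu lam sig :: real and x :: "real^3"
  assumes "0 < lamstar" "0 < sigstar" "0 < mu" "mu < (1 / (8 * (1 + sigstar)))^2"
    and lam: "lam \<in> {lamstar/2..2 * lamstar}" and sig: "sig \<in> {sigstar/2..2 * sigstar}"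
    and i: "i < nat \<lfloor>1 / sqrt mu\<rfloor>"
  defines "k \<equiv> nat \<lfloor>1 / sqrt mu\<rfloor>" and "eps \<equiv> mu / lam" and "r \<equiv> 1 - sig * sqrt mu"
  defines "di \<equiv> dfun eps r (mvec k i) x" and "ds \<equiv> dstar eps r (mvec k i) x"
  shows "x \<in> cball 0 1 - closure (Omega k i) \<Longrightarrow>
      (lamstar/2) / sqrt mu \<le> di \<and> di \<le> ds \<and> ds \<le> sqrt (1 + 4*(2 * sigstar)*(2 * sigstar + 1)) * di
      \<and> ds - di \<le> 4*(2 * sigstar + 1)*(4 * sigstar*lamstar) / sqrt mu"
    and "x \<in> closure (Omega k i) \<Longrightarrow> di \<le> ds \<and> (sigstar*lamstar/4) / sqrt mu \<le> ds"
proof -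
  define q where "q = sqrt mu"
  have q: "0 < q" "q^2 = mu" using assms(3) by (simp_all add: q_def)
  have "0 < lam" "0 < sig" using lam sig assms(1,2) by auto
  have eps: "0 < eps" "q / eps = lam / q" "(1 - r) / eps = sig * lam / q"
    using q \<open>0 < lam\<close> by (auto simp: eps_def r_def q_def[symmetric] field_simps power2_eq_square)
  have k: "2 \<le> k" and r: "3/4 \<le> r"
    using small_mu_regime[OF assms(3,4) \<open>0 < sig\<close>] sig by (auto simp: k_def r_def)
  have "r \<le> 1" using q \<open>0 < sig\<close> by (simp add: r_def q_def)
  have "sigstar*lamstar/4 \<le> sig * lam"
    using mult_mono[of "sigstar/2" sig "lamstar/2" lam] lam sig assms(1,2) by auto
  then have defect_ge: "sigstar*lamstar/4 / q \<le> (1 - r) / eps"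
    unfolding eps by (rule divide_right_mono) (use q in simp)
  have "sig * lam \<le> 4 * sigstar*lamstar"
    using mult_mono[of sig "2 * sigstar" lam "2 * lamstar"] lam sig \<open>0 < lam\<close> assms(2) by auto
  then have defect_le: "(1 - r) / eps \<le> 4 * sigstar*lamstar / q"
    unfolding eps by (rule divide_right_mono) (use q in simp)
  show "x \<in> closure (Omega k i) \<Longrightarrow> di \<le> ds \<and> (sigstar*lamstar/4) / sqrt mu \<le> ds"
  proof
    assume "x \<in> closure (Omega k i)"
    then have "norm x \<le> 1" using closure_Omega_subset by fastforce
    then show "di \<le> ds" using r \<open>r \<le> 1\<close> by (simp add: di_def ds_def dfun_le_dstar)
    show "(sigstar*lamstar/4) / sqrt mu \<le> ds"
      using one_minus_div_le_dstar[OF eps(1) _ \<open>norm x \<le> 1\<close> norm_mvec, of r k i] r defect_ge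
      unfolding ds_def q_def by linarith
  qed
  assume x: "x \<in> cball 0 1 - closure (Omega k i)"
  then have "norm x \<le> 1" by simp
  have "real k \<le> 1 / q"
    using q(1) by (simp add: k_def q_def[symmetric])
  then have "q \<le> 1 / real k"
    using k q by (simp add: field_simps)
  also have "\<dots> \<le> norm (x - r *\<^sub>R mvec k i)"
    using norm_diff_scaleR_mvec_ge[OF k i[folded k_def] r x] .
  finally have a: "q \<le> norm (x - r *\<^sub>R mvec k i)" .
  have "1 - r \<le> 2 * sigstar * norm (x - r *\<^sub>R mvec k i)"
    using a sig q by (simp add: r_def q_def[symmetric] mult_mono)
  note est = dstar_le_dfun[OF eps(1) _ \<open>r \<le> 1\<close> \<open>norm x \<le> 1\<close> norm_mvec _ this]
  have "lam / q = q / eps" by (simp add: eps(2))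
  also have "\<dots> \<le> norm (x - r *\<^sub>R mvec k i) / eps"
    using a eps(1) by (simp add: divide_right_mono)
  also have "\<dots> \<le> di" unfolding di_def using eps(1) by (rule dfun_ge)
  finally have "lam / q \<le> di" .
  moreover have "lamstar/2 / q \<le> lam / q"
    using lam by (intro divide_right_mono) (use q in auto)
  moreover have "ds - di \<le> 4*(2 * sigstar + 1)*(4 * sigstar*lamstar) / q"
    using est(2) r defect_le assms(2) mult_left_mono[OF defect_le, of "4*(2 * sigstar + 1)"]
    by (simp add: di_def ds_def)
  ultimately show "(lamstar/2) / sqrt mu \<le> di \<and> di \<le> ds
      \<and> ds \<le> sqrt (1 + 4*(2 * sigstar)*(2 * sigstar + 1)) * di
      \<and> ds - di \<le> 4*(2 * sigstar + 1)*(4 * sigstar*lamstar) / sqrt mu"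
    using est(1) r assms(2) \<open>r \<le> 1\<close> \<open>norm x \<le> 1\<close>
    by (simp add: di_def ds_def q_def dfun_le_dstar)
qed

theorem lemmaA3:
  fixes lamstar sigstar :: real
  assumes "lamstar > 0" and "sigstar > 0"
  shows "\<exists>C0>0. \<exists>C1>0. \<exists>C2>0. \<exists>mu0>0.
    (\<forall>mu lam sig i x.
       0 < mu \<and> mu < mu0 \<and> lam \<in> {lamstar/2..2 * lamstar} \<and> sig \<in> {sigstar/2..2 * sigstar}
       \<and> i < nat \<lfloor>1 / sqrt mu\<rfloor> \<longrightarrow>
       (let k = nat \<lfloor>1 / sqrt mu\<rfloor>; eps = mu / lam; r = 1 - sig * sqrt mu;
            m = mvec k i; di = dfun eps r m x; ds = dstar eps r m x in
         (x \<in> cball 0 1 - closure (Omega k i) \<longrightarrow>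
            C0 / sqrt mu \<le> di \<and> di \<le> ds \<and> ds \<le> C1 * di) \<and>
         (x \<in> closure (Omega k i) \<longrightarrow> di \<le> ds \<and> C2 / sqrt mu \<le> ds)))
    \<and> (\<forall>\<rho>::real. \<exists>C>0. \<forall>mu lam sig i x.
       0 < mu \<and> mu < mu0 \<and> lam \<in> {lamstar/2..2 * lamstar} \<and> sig \<in> {sigstar/2..2 * sigstar}
       \<and> i < nat \<lfloor>1 / sqrt mu\<rfloor> \<longrightarrow>
       (let k = nat \<lfloor>1 / sqrt mu\<rfloor>; eps = mu / lam; r = 1 - sig * sqrt mu;
            m = mvec k i; di = dfun eps r m x; ds = dstar eps r m x in
         x \<in> cball 0 1 - closure (Omega k i) \<longrightarrow>
            \<bar>1 / di powr \<rho> - 1 / ds powr \<rho>\<bar> \<le> C / (sqrt mu * ds powr (\<rho> + 1))))"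
proof -
  define C1 where "C1 = sqrt (1 + 4*(2 * sigstar)*(2 * sigstar + 1))"
  define D where "D = 4*(2 * sigstar + 1)*(4 * sigstar*lamstar)"
  define mu0 :: real where "mu0 = (1 / (8 * (1 + sigstar)))^2"
  have "0 < C1" "0 < D" "0 < mu0"
    using assms by (auto simp: C1_def D_def mu0_def add_pos_nonneg)
  note est = dfun_dstar_estimates[OF assms, folded C1_def D_def mu0_def]
  have powr_bound: "\<bar>1 / di powr \<rho> - 1 / ds powr \<rho>\<bar>
      \<le> (\<bar>\<rho>\<bar> * C1 powr \<bar>\<rho> + 1\<bar> * D + 1) / (sqrt mu * ds powr (\<rho> + 1))"
    if "0 < mu" "1 \<le> di" "di \<le> ds" "ds \<le> C1 * di" "ds - di \<le> D / sqrt mu" for mu di ds \<rho>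
  proof -
    have "\<bar>1 / di powr \<rho> - 1 / ds powr \<rho>\<bar> \<le> \<bar>\<rho>\<bar> * C1 powr \<bar>\<rho> + 1\<bar> * (D / sqrt mu) / ds powr (\<rho> + 1)"
      using that by (intro abs_inverse_powr_diff_le) auto
    also have "\<dots> \<le> (\<bar>\<rho>\<bar> * C1 powr \<bar>\<rho> + 1\<bar> * D + 1) / (sqrt mu * ds powr (\<rho> + 1))"
      using that by (simp add: divide_right_mono)
    finally show ?thesis .
  qed
  have pos: "0 < \<bar>\<rho>\<bar> * C1 powr \<bar>\<rho> + 1\<bar> * D + 1" for \<rho>
    using \<open>0 < D\<close> by (simp add: add_nonneg_pos)
  show ?thesis
    unfolding Let_def
    apply (rule exI[of _ "lamstar/2"], rule conjI, simp add: assms)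
    apply (rule exI[of _ C1], rule conjI, fact)
    apply (rule exI[of _ "sigstar*lamstar/4"], rule conjI, simp add: assms)
    apply (rule exI[of _ mu0], rule conjI, fact)
    apply (rule conjI)
     apply (use est in blast)
    apply (intro allI exI[of _ "\<bar>\<rho>\<bar> * C1 powr \<bar>\<rho> + 1\<bar> * D + 1" for \<rho>] conjI pos impI)
    using est(1) powr_bound dfun_ge_one by blast
qed

end
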